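(* Let $\mathcal{V}$ be a variety of $\Omega$-algebras and let $\sigma$ be an identity holding in $\mathcal{V}$. Then every algebra in the Mal'tsev product $\mathcal{V}\circ\mathcal{S}$ satisfies every identity in $\sigma^p$.
   Context: Standing conventions: $\Omega$-algebras are of a plural similarity type (no nullary operation symbols, at least one operation symbol of arity $\ge2$). $T_n$ is the set of $\Omega$-terms in $x_1,\dots,x_n$ in which all $n$ variables occur. An identity is regular if the same variables occur on both sides. $\mathcal{S}$ is the variety of $\Omega$-algebras satisfying all regular identities. $\mathcal{V}\circ\mathcal{S}$ is the class of $\Omega$-algebras $A$ having a congruence $\theta$ with $A/\theta\in\mathcal{S}$ and every $\theta$-class (a subalgebra) in $\mathcal{V}$. For an identity $\sigma$ of the form $u(y_1,\dots,y_n)=v(y_1,\dots,y_n)$ (variables of $u,v$ among $y_1,\dots,y_n$) and $m\ge1$, $\sigma^p_m$ is the set of all identities $u(r_1,\dots,r_n)=v(r_1,\dots,r_n)$ obtained by substituting $r_i(x_1,\dots,x_m)$ for $y_i$, where $r_1,\dots,r_n$ range over $T_m$; $\sigma^p=\bigcup_{m>0}\sigma^p_m$. *)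

theory Defs
  imports Main
begin

text \<open>A similarity type is given by a type 'f of operation symbols together with
  an arity function. Variables are natural numbers; x_i / y_i is variable i.\<close>

definition plural :: "('f \<Rightarrow> nat) \<Rightarrow> bool" where
  "plural arity \<longleftrightarrow> (\<forall>f. arity f \<ge> 1) \<and> (\<exists>f. arity f \<ge> 2)"

datatype ('f, 'v) trm = Var 'v | Fn 'f "('f, 'v) trm list"

fun wf_trm :: "('f \<Rightarrow> nat) \<Rightarrow> ('f, 'v) trm \<Rightarrow> bool" where
  "wf_trm arity (Var x) = True"
| "wf_trm arity (Fn f ts) = (length ts = arity f \<and> (\<forall>t\<in>set ts. wf_trm arity t))"

fun vars :: "('f, 'v) trm \<Rightarrow> 'v set" where
  "vars (Var x) = {x}"
| "vars (Fn f ts) = (\<Union>t\<in>set ts. vars t)"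

fun subst :: "('v \<Rightarrow> ('f, 'w) trm) \<Rightarrow> ('f, 'v) trm \<Rightarrow> ('f, 'w) trm" where
  "subst r (Var x) = r x"
| "subst r (Fn f ts) = Fn f (map (subst r) ts)"

record ('a, 'f) alg =
  carrier :: "'a set"
  ops :: "'f \<Rightarrow> 'a list \<Rightarrow> 'a"

fun eval :: "('f \<Rightarrow> 'a list \<Rightarrow> 'a) \<Rightarrow> ('v \<Rightarrow> 'a) \<Rightarrow> ('f, 'v) trm \<Rightarrow> 'a" where
  "eval op h (Var x) = h x"
| "eval op h (Fn f ts) = op f (map (eval op h) ts)"

definition is_algebra :: "('f \<Rightarrow> nat) \<Rightarrow> ('a, 'f) alg \<Rightarrow> bool" where
  "is_algebra arity A \<longleftrightarrow> carrier A \<noteq> {} \<and>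
     (\<forall>f xs. length xs = arity f \<and> set xs \<subseteq> carrier A \<longrightarrow> ops A f xs \<in> carrier A)"

type_synonym 'f identity = "('f, nat) trm \<times> ('f, nat) trm"

definition wf_identity :: "('f \<Rightarrow> nat) \<Rightarrow> 'f identity \<Rightarrow> bool" where
  "wf_identity arity e \<longleftrightarrow> wf_trm arity (fst e) \<and> wf_trm arity (snd e)"

definition regular :: "'f identity \<Rightarrow> bool" where
  "regular e \<longleftrightarrow> vars (fst e) = vars (snd e)"

definition satisfies :: "('a, 'f) alg \<Rightarrow> 'f identity \<Rightarrow> bool" where
  "satisfies A e \<longleftrightarrow>
     (\<forall>h. (\<forall>x. h x \<in> carrier A) \<longrightarrow> eval (ops A) h (fst e) = eval (ops A) h (snd e))"

text \<open>A variety (equational class): the class of all algebras satisfying a set E of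
  identities. Classes are represented as predicates on algebras with carriers in 'a.\<close>
definition is_variety :: "('f \<Rightarrow> nat) \<Rightarrow> (('a, 'f) alg \<Rightarrow> bool) \<Rightarrow> bool" where
  "is_variety arity V \<longleftrightarrow> (\<exists>E. (\<forall>e\<in>E. wf_identity arity e) \<and>
     (\<forall>B. V B \<longleftrightarrow> is_algebra arity B \<and> (\<forall>e\<in>E. satisfies B e)))"

definition holds_in :: "(('a, 'f) alg \<Rightarrow> bool) \<Rightarrow> 'f identity \<Rightarrow> bool" where
  "holds_in V e \<longleftrightarrow> (\<forall>B. V B \<longrightarrow> satisfies B e)"

definition is_congruence :: "('f \<Rightarrow> nat) \<Rightarrow> ('a, 'f) alg \<Rightarrow> ('a \<times> 'a) set \<Rightarrow> bool" where
  "is_congruence arity A \<theta> \<longleftrightarrow> equiv (carrier A) \<theta> \<and>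
     (\<forall>f xs ys. length xs = arity f \<and> length ys = arity f \<and>
        set xs \<subseteq> carrier A \<and> set ys \<subseteq> carrier A \<and>
        list_all2 (\<lambda>x y. (x, y) \<in> \<theta>) xs ys \<longrightarrow> (ops A f xs, ops A f ys) \<in> \<theta>)"

definition quot_alg :: "('a, 'f) alg \<Rightarrow> ('a \<times> 'a) set \<Rightarrow> ('a set, 'f) alg" where
  "quot_alg A \<theta> = \<lparr>carrier = carrier A // \<theta>,
     ops = (\<lambda>f Cs. \<theta> `` {ops A f (map (\<lambda>C. SOME x. x \<in> C) Cs)})\<rparr>"

definition in_S :: "('f \<Rightarrow> nat) \<Rightarrow> ('b, 'f) alg \<Rightarrow> bool" where
  "in_S arity B \<longleftrightarrow> is_algebra arity B \<and>
     (\<forall>e. wf_identity arity e \<and> regular e \<longrightarrow> satisfies B e)"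

definition class_alg :: "('a, 'f) alg \<Rightarrow> ('a \<times> 'a) set \<Rightarrow> 'a \<Rightarrow> ('a, 'f) alg" where
  "class_alg A \<theta> a = \<lparr>carrier = \<theta> `` {a}, ops = ops A\<rparr>"

definition in_maltsev_S :: "('f \<Rightarrow> nat) \<Rightarrow> (('a, 'f) alg \<Rightarrow> bool) \<Rightarrow> ('a, 'f) alg \<Rightarrow> bool" where
  "in_maltsev_S arity V A \<longleftrightarrow> is_algebra arity A \<and>
     (\<exists>\<theta>. is_congruence arity A \<theta> \<and> in_S arity (quot_alg A \<theta>) \<and>
        (\<forall>a\<in>carrier A. V (class_alg A \<theta> a)))"

definition T :: "('f \<Rightarrow> nat) \<Rightarrow> nat \<Rightarrow> ('f, nat) trm set" where
  "T arity m = {t. wf_trm arity t \<and> vars t = {1..m}}"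

text \<open>For sigma = (u,v) with variables among y_1..y_n (n given).\<close>
definition sigma_p_m :: "('f \<Rightarrow> nat) \<Rightarrow> nat \<Rightarrow> 'f identity \<Rightarrow> nat \<Rightarrow> 'f identity set" where
  "sigma_p_m arity n \<sigma> m = {(subst r (fst \<sigma>), subst r (snd \<sigma>)) | r.
      \<forall>i\<in>{1..n}. r i \<in> T arity m}"

definition sigma_p :: "('f \<Rightarrow> nat) \<Rightarrow> nat \<Rightarrow> 'f identity \<Rightarrow> 'f identity set" where
  "sigma_p arity n \<sigma> = (\<Union>m\<in>{m. m > 0}. sigma_p_m arity n \<sigma> m)"

end

theory Submission
  imports Defs
begin

text \<open>Let \<open>\<theta>\<close> witness \<open>A \<in> \<V> \<circ> \<S>\<close> and let \<open>r\<^sub>1, \<dots>, r\<^sub>n \<in> T\<^sub>m\<close>.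
  Any two \<open>r\<^sub>i, r\<^sub>j\<close> contain the same variables, so \<open>r\<^sub>i = r\<^sub>j\<close> is a regular identity and holds
  in \<open>A/\<theta>\<close>. Hence, under any assignment, the values of \<open>r\<^sub>1, \<dots>, r\<^sub>n\<close> lie in a single
  \<open>\<theta>\<close>-class. That class is an algebra in \<open>\<V>\<close>, so it satisfies \<open>\<sigma>\<close> at \<open>y\<^sub>i \<mapsto> r\<^sub>i\<close>, which
  is exactly the substituted identity at the given assignment.\<close>

lemma eval_closed:
  assumes "is_algebra arity A" "\<forall>x. h x \<in> carrier A" "wf_trm arity t"
  shows "eval (ops A) h t \<in> carrier A"
  using assms(3)
proof (induction t)
  case (Var x)
  then show ?case using assms(2) by simp
next
  case (Fn f ts)
  then have "set (map (eval (ops A) h) ts) \<subseteq> carrier A" by auto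
  then show ?case using assms(1) Fn.prems unfolding is_algebra_def by auto
qed

lemma eval_subst: "eval op h (subst r t) = eval op (\<lambda>x. eval op h (r x)) t"
  by (induction t) (auto cong: map_cong)

lemma eval_cong: "\<forall>x\<in>vars t. h x = h' x \<Longrightarrow> eval op h t = eval op h' t"
  by (induction t) (auto cong: map_cong)

lemma congruence_equiv: "is_congruence arity A \<theta> \<Longrightarrow> equiv (carrier A) \<theta>"
  unfolding is_congruence_def by blast

lemma quot_alg_ops_classes:
  assumes cg: "is_congruence arity A \<theta>"
    and len: "length xs = arity f" and xs: "set xs \<subseteq> carrier A"
  shows "ops (quot_alg A \<theta>) f (map (\<lambda>x. \<theta> `` {x}) xs) = \<theta> `` {ops A f xs}"
proof -
  have eq: "equiv (carrier A) \<theta>" using cg by (rule congruence_equiv)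
  define ys where "ys = map (\<lambda>x. SOME y. y \<in> \<theta> `` {x}) xs"
  have rep: "(x, SOME y. y \<in> \<theta> `` {x}) \<in> \<theta>" if "x \<in> carrier A" for x
  proof -
    have "x \<in> \<theta> `` {x}" using eq that unfolding equiv_def refl_on_def by blast
    then show ?thesis using someI[of "\<lambda>y. y \<in> \<theta> `` {x}"] by simp
  qed
  have ys: "set ys \<subseteq> carrier A"
    using rep xs eq unfolding ys_def equiv_def refl_on_def by auto
  have "list_all2 (\<lambda>x y. (x, y) \<in> \<theta>) xs ys"
    unfolding ys_def list_all2_conv_all_nth using rep xs by (auto simp: subset_iff)
  then have "(ops A f xs, ops A f ys) \<in> \<theta>"
    using cg len xs ys unfolding is_congruence_def ys_def by auto
  then have "\<theta> `` {ops A f ys} = \<theta> `` {ops A f xs}"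
    using eq by (metis equiv_class_eq_iff)
  then show ?thesis by (simp add: quot_alg_def ys_def comp_def)
qed

lemma eval_quot_alg:
  assumes cg: "is_congruence arity A \<theta>" and alg: "is_algebra arity A"
    and h: "\<forall>x. h x \<in> carrier A" and t: "wf_trm arity t"
  shows "eval (ops (quot_alg A \<theta>)) (\<lambda>x. \<theta> `` {h x}) t = \<theta> `` {eval (ops A) h t}"
  using t
proof (induction t)
  case (Var x)
  then show ?case by simp
next
  case (Fn f ts)
  then have IH: "map (eval (ops (quot_alg A \<theta>)) (\<lambda>x. \<theta> `` {h x})) ts
      = map (\<lambda>x. \<theta> `` {x}) (map (eval (ops A) h) ts)"
    by auto
  have "eval (ops (quot_alg A \<theta>)) (\<lambda>x. \<theta> `` {h x}) (Fn f ts)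
      = ops (quot_alg A \<theta>) f (map (\<lambda>x. \<theta> `` {x}) (map (eval (ops A) h) ts))"
    by (simp only: eval.simps IH)
  also have "\<dots> = \<theta> `` {ops A f (map (eval (ops A) h) ts)}"
    using Fn.prems eval_closed[OF alg h] by (intro quot_alg_ops_classes[OF cg]) auto
  finally show ?case by simp
qed

lemma regular_terms_congruent_in_quot_S:
  fixes s t :: "('f, nat) trm"
  assumes cg: "is_congruence arity A \<theta>" and alg: "is_algebra arity A"
    and S: "in_S arity (quot_alg A \<theta>)" and h: "\<forall>x. h x \<in> carrier A"
    and s: "wf_trm arity s" and t: "wf_trm arity t" and st: "vars s = vars t"
  shows "(eval (ops A) h s, eval (ops A) h t) \<in> \<theta>"
proof -
  have "satisfies (quot_alg A \<theta>) (s, t)"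
    using S s t st unfolding in_S_def wf_identity_def regular_def by auto
  moreover have "\<forall>x. \<theta> `` {h x} \<in> carrier (quot_alg A \<theta>)"
    using h by (simp add: quot_alg_def quotientI)
  ultimately have "eval (ops (quot_alg A \<theta>)) (\<lambda>x. \<theta> `` {h x}) s
      = eval (ops (quot_alg A \<theta>)) (\<lambda>x. \<theta> `` {h x}) t"
    unfolding satisfies_def by auto
  then have "\<theta> `` {eval (ops A) h s} = \<theta> `` {eval (ops A) h t}"
    using eval_quot_alg[OF cg alg h] s t by simp
  then show ?thesis
    using congruence_equiv[OF cg] eval_closed[OF alg h] s t by (simp add: equiv_class_eq_iff)
qed

lemma T_values_in_one_class:
  fixes h :: "nat \<Rightarrow> 'a"
  assumes cg: "is_congruence arity A \<theta>" and alg: "is_algebra arity A"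
    and S: "in_S arity (quot_alg A \<theta>)" and h: "\<forall>x. h x \<in> carrier A"
    and r: "\<forall>i\<in>I. r i \<in> T arity m"
  obtains a where "a \<in> carrier A" "\<forall>i\<in>I. (a, eval (ops A) h (r i)) \<in> \<theta>"
proof (cases "I = {}")
  case True
  then show ?thesis using that h by blast
next
  case False
  then obtain j where j: "j \<in> I" by blast
  have "(eval (ops A) h (r j), eval (ops A) h (r i)) \<in> \<theta>" if "i \<in> I" for i
    using regular_terms_congruent_in_quot_S[OF cg alg S h] r j that by (simp add: T_def)
  moreover have "eval (ops A) h (r j) \<in> carrier A"
    using eval_closed[OF alg h] r j by (simp add: T_def)
  ultimately show ?thesis using that by blast
qed

lemma eval_eq_if_class_satisfies:
  assumes sat: "satisfies (class_alg A \<theta> a) e" and a: "(a, a) \<in> \<theta>"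
    and h: "\<forall>x\<in>vars (fst e) \<union> vars (snd e). (a, h x) \<in> \<theta>"
  shows "eval (ops A) h (fst e) = eval (ops A) h (snd e)"
proof -
  define h' where "h' x = (if x \<in> vars (fst e) \<union> vars (snd e) then h x else a)" for x
  have "\<forall>x. h' x \<in> carrier (class_alg A \<theta> a)"
    using a h unfolding h'_def class_alg_def by auto
  then have "eval (ops A) h' (fst e) = eval (ops A) h' (snd e)"
    using sat unfolding satisfies_def by (simp add: class_alg_def)
  moreover have "eval (ops A) h' (fst e) = eval (ops A) h (fst e)"
    and "eval (ops A) h' (snd e) = eval (ops A) h (snd e)"
    by (auto intro: eval_cong simp: h'_def)
  ultimately show ?thesis by simp
qed

theorem lemma2p6:
  fixes arity :: "'f \<Rightarrow> nat"
    and V :: "('a, 'f) alg \<Rightarrow> bool"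
    and \<sigma> :: "'f identity"
    and n :: nat
    and A :: "('a, 'f) alg"
  assumes "plural arity"
    and "is_variety arity V"
    and "wf_identity arity \<sigma>"
    and "vars (fst \<sigma>) \<union> vars (snd \<sigma>) \<subseteq> {1..n}"
    and "holds_in V \<sigma>"
    and "in_maltsev_S arity V A"
  shows "\<forall>e\<in>sigma_p arity n \<sigma>. satisfies A e"
proof
  fix e assume "e \<in> sigma_p arity n \<sigma>"
  then obtain m r where r: "\<forall>i\<in>{1..n}. r i \<in> T arity m"
    and e: "e = (subst r (fst \<sigma>), subst r (snd \<sigma>))"
    unfolding sigma_p_def sigma_p_m_def by blast
  obtain \<theta> where alg: "is_algebra arity A" and cg: "is_congruence arity A \<theta>"
    and S: "in_S arity (quot_alg A \<theta>)" and cls: "\<forall>a\<in>carrier A. V (class_alg A \<theta> a)"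
    using assms(6) unfolding in_maltsev_S_def by blast
  show "satisfies A e" unfolding satisfies_def
  proof (intro allI impI)
    fix h :: "nat \<Rightarrow> 'a" assume h: "\<forall>x. h x \<in> carrier A"
    obtain a where a: "a \<in> carrier A" and ra: "\<forall>i\<in>{1..n}. (a, eval (ops A) h (r i)) \<in> \<theta>"
      using T_values_in_one_class[OF cg alg S h r] by blast
    have "satisfies (class_alg A \<theta> a) \<sigma>"
      using assms(5) cls a unfolding holds_in_def by blast
    moreover have "(a, a) \<in> \<theta>"
      using congruence_equiv[OF cg] a unfolding equiv_def refl_on_def by blast
    ultimately show "eval (ops A) h (fst e) = eval (ops A) h (snd e)"
      using eval_eq_if_class_satisfies[of A \<theta> a \<sigma> "\<lambda>x. eval (ops A) h (r x)"] ra assms(4)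
      by (auto simp: e eval_subst)
  qed
qed

end
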